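(* Let $\mathbb{X}$ be a real Banach space and let $f\in \mathbb{X}^{**}$ be weak$^*$ continuous. Let $\mathbb{Y}$ be a linear subspace of $\mathbb{X}^{**}$ such that each member of $\mathbb{Y}$ is weak$^*$ continuous and $f\notin \mathbb{Y}$. Let $g_0\in \mathbb{Y}$. Then $g_0$ is a best approximation to $f$ out of $\mathbb{Y}$ if and only if for every finite-dimensional subspace $\mathbb{Z}$ of $\mathbb{Y}$ containing $g_0$, $$\Big(\bigcap_{g\in \mathbb{Z}}\mathcal{N}(g)\Big)\cap M_{f-g_0} \neq \emptyset.$$
   Context: A functional in $\mathbb{X}^{**}$ is weak$^*$ continuous (as a functional on $\mathbb{X}^*$) iff it equals $\psi(x)$ for some $x\in\mathbb{X}$, $\psi$ the canonical embedding. For $h\in\mathbb{X}^{**}$: $\mathcal{N}(h)=\{x^*\in\mathbb{X}^*:h(x^* )=0\}$ and $M_h=\{x^*\in S_{\mathbb{X}^*}: |h(x^* )|=\|h\|\}$, where $S_{\mathbb{X}^*}$ is the unit sphere of $\mathbb{X}^*$. An element $g_0\in\mathbb{Y}$ is a best approximation to $f$ out of $\mathbb{Y}$ if $\|f-g_0\|=\inf\{\|f-g\|: g\in\mathbb{Y}\}$. *)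

theory Defs
  imports "HOL-Analysis.Analysis"
begin

definition weak_star_topology :: "('a::real_normed_vector \<Rightarrow>\<^sub>L real) topology" where
  "weak_star_topology =
     topology_generated_by {{\<phi>. blinfun_apply \<phi> x \<in> U} | x U. open (U::real set)}"

definition weak_star_continuous :: "(('a::real_normed_vector \<Rightarrow>\<^sub>L real) \<Rightarrow>\<^sub>L real) \<Rightarrow> bool" where
  "weak_star_continuous h \<longleftrightarrow> continuous_map weak_star_topology euclideanreal (blinfun_apply h)"

definition null_space :: "(('a::real_normed_vector \<Rightarrow>\<^sub>L real) \<Rightarrow>\<^sub>L real) \<Rightarrow> ('a \<Rightarrow>\<^sub>L real) set" where
  "null_space h = {xs. blinfun_apply h xs = 0}"

definition norming_set :: "(('a::real_normed_vector \<Rightarrow>\<^sub>L real) \<Rightarrow>\<^sub>L real) \<Rightarrow> ('a \<Rightarrow>\<^sub>L real) set" where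
  "norming_set h = {xs \<in> sphere 0 1. \<bar>blinfun_apply h xs\<bar> = norm h}"

definition best_approximation :: "'b::real_normed_vector \<Rightarrow> 'b set \<Rightarrow> 'b \<Rightarrow> bool" where
  "best_approximation f Y g0 \<longleftrightarrow> g0 \<in> Y \<and> norm (f - g0) = Inf {norm (f - g) | g. g \<in> Y}"

end

(*
  A weak-star continuous functional on X* is an evaluation at a point of X: it is bounded on a
  basic weak-star neighbourhood of 0, hence vanishes on the common kernel of finitely many
  evaluations, and is therefore a combination of them. So f is the image of some x0 and every
  subspace Z of Y is the image of a subspace W of X. If g0 is nearest to f, then x0 has
  distance at least d = norm (f - g0) from W, and Hahn-Banach gives a functional of norm one
  that vanishes on W and takes the value d at x0: a common zero of Z that norms f - g0. Conversely, such a functional for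
  Z = span {g0, g} shows norm (f - g0) = |(f - g) phi| <= norm (f - g).
*)
theory Submission
  imports Defs
begin

section \<open>Hahn--Banach theorem for dominated graphs\<close>

definition sublinear :: "('a::real_vector \<Rightarrow> real) \<Rightarrow> bool" where
  "sublinear p \<longleftrightarrow> (\<forall>x y. p (x + y) \<le> p x + p y) \<and> (\<forall>c x. 0 < c \<longrightarrow> p (c *\<^sub>R x) = c * p x)"

(* Functionals defined on a subspace are represented by their graphs, so that Zorn's lemma
   applies to set inclusion. *)
definition dominated_graph :: "('a::real_vector \<Rightarrow> real) \<Rightarrow> ('a \<times> real) set \<Rightarrow> bool" where
  "dominated_graph p G \<longleftrightarrow> subspace G \<and> (\<forall>x y z. (x, y) \<in> G \<longrightarrow> (x, z) \<in> G \<longrightarrow> y = z) \<and>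
     (\<forall>(x, y)\<in>G. y \<le> p x)"

lemma sublinear_norm: "sublinear norm"
  unfolding sublinear_def by (simp add: norm_triangle_ineq)

lemma subspace_Union_chain:
  assumes "C \<noteq> {}" "\<And>S. S \<in> C \<Longrightarrow> subspace S" "\<And>S T. S \<in> C \<Longrightarrow> T \<in> C \<Longrightarrow> S \<subseteq> T \<or> T \<subseteq> S"
  shows "subspace (\<Union>C)"
  unfolding subspace_def
proof (intro conjI ballI allI)
  show "0 \<in> \<Union>C" using assms(1,2) subspace_0 by blast
next
  fix x y assume "x \<in> \<Union>C" "y \<in> \<Union>C"
  then obtain S T where "S \<in> C" "T \<in> C" "x \<in> S" "y \<in> T" by blast
  with assms(2) assms(3)[of S T] show "x + y \<in> \<Union>C" by (meson UnionI subsetD subspace_add)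
next
  fix c :: real and x assume "x \<in> \<Union>C"
  with assms(2) show "c *\<^sub>R x \<in> \<Union>C" by (meson UnionE UnionI subspace_scale)
qed

lemma dominated_graph_Union_chain:
  assumes "C \<noteq> {}" "\<And>G. G \<in> C \<Longrightarrow> dominated_graph p G"
    and chain: "\<And>G H. G \<in> C \<Longrightarrow> H \<in> C \<Longrightarrow> G \<subseteq> H \<or> H \<subseteq> G"
  shows "dominated_graph p (\<Union>C)"
  unfolding dominated_graph_def
proof (intro conjI allI impI)
  show "subspace (\<Union>C)"
    using assms by (intro subspace_Union_chain) (auto simp: dominated_graph_def)
  show "\<forall>(x, y)\<in>\<Union>C. y \<le> p x"
    using assms(2) by (fastforce simp: dominated_graph_def)
  fix x y z assume "(x, y) \<in> \<Union>C" "(x, z) \<in> \<Union>C"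
  then obtain G H where "G \<in> C" "H \<in> C" "(x, y) \<in> G" "(x, z) \<in> H" by blast
  with assms(2) chain[of G H] show "y = z" unfolding dominated_graph_def by blast
qed

lemma subspace_graph_single_valued:
  assumes "subspace G" "\<And>v. (0, v) \<in> G \<Longrightarrow> v = (0::real)" "(x, y) \<in> G" "(x, z) \<in> G"
  shows "y = z"
  using assms(2)[of "y - z"] subspace_diff[OF assms(1,3,4)] by simp

lemma dominated_graph_extension_value_exists:
  assumes p: "sublinear p" and M: "dominated_graph p M"
  obtains c where "\<And>x y. (x, y) \<in> M \<Longrightarrow> y - p (x - x1) \<le> c"
    and "\<And>x y. (x, y) \<in> M \<Longrightarrow> c \<le> p (x + x1) - y"
proof -
  define L where "L = {y - p (x - x1) | x y. (x, y) \<in> M}"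
  have M0: "(0, 0) \<in> M"
    using M subspace_0[of M] by (simp add: dominated_graph_def zero_prod_def)
  have below: "l \<le> p (z + x1) - w" if "l \<in> L" "(z, w) \<in> M" for l z w
  proof -
    obtain x y where l: "l = y - p (x - x1)" and xy: "(x, y) \<in> M"
      using \<open>l \<in> L\<close> unfolding L_def by blast
    have "(x + z, y + w) \<in> M"
      using M subspace_add[of M "(x, y)" "(z, w)"] xy that(2) by (simp add: dominated_graph_def)
    then have "y + w \<le> p ((x - x1) + (z + x1))"
      using M unfolding dominated_graph_def by auto
    also have "\<dots> \<le> p (x - x1) + p (z + x1)"
      using p unfolding sublinear_def by blast
    finally show ?thesis using l by simp
  qed
  have "L \<noteq> {}" using M0 unfolding L_def by blast
  moreover have "bdd_above L" using below M0 by (meson bdd_aboveI)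
  ultimately show ?thesis
  proof (intro that)
    show "y - p (x - x1) \<le> Sup L" if "(x, y) \<in> M" for x y
      using \<open>bdd_above L\<close> that unfolding L_def by (blast intro: cSup_upper)
    show "Sup L \<le> p (x + x1) - y" if "(x, y) \<in> M" for x y
      using \<open>L \<noteq> {}\<close> below that by (blast intro: cSup_least)
  qed
qed

lemma dominated_graph_extend:
  assumes p: "sublinear p" and M: "dominated_graph p M" and x1: "\<And>y. (x1, y) \<notin> M"
    and lower: "\<And>x y. (x, y) \<in> M \<Longrightarrow> y - p (x - x1) \<le> c"
    and upper: "\<And>x y. (x, y) \<in> M \<Longrightarrow> c \<le> p (x + x1) - y"
  shows "dominated_graph p (span (insert (x1, c) M))"
proof -
  have Msub: "subspace M" using M unfolding dominated_graph_def by blast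
  have scale: "(a *\<^sub>R x, a * y) \<in> M" if "(x, y) \<in> M" for a x y
    using subspace_scale[OF Msub that, of a] by simp
  have mem: "(u, v) \<in> span (insert (x1, c) M) \<longleftrightarrow> (\<exists>t. (u - t *\<^sub>R x1, v - t * c) \<in> M)" for u v
    using Msub by (simp add: span_insert span_eq_iff[THEN iffD2])
  have single_valued: "v = 0" if v: "(0, v) \<in> span (insert (x1, c) M)" for v
  proof -
    obtain t where t: "(- (t *\<^sub>R x1), v - t * c) \<in> M" using mem[of 0 v] v by auto
    have "t = 0"
    proof (rule ccontr)
      assume "t \<noteq> 0"
      then show False using x1 scale[OF t, of "- 1 / t"] by simp
    qed
    then show "v = 0"
      using t M subspace_0[OF Msub] unfolding dominated_graph_def zero_prod_def by auto
  qed
  \<comment> \<open>scaling by \<open>1 / \<bar>t\<bar>\<close> reduces the bound to one of the two inequalities defining \<open>c\<close>\<close>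
  have bounded: "v \<le> p u" if "(u - t *\<^sub>R x1, v - t * c) \<in> M" for u v t
  proof -
    have homogeneous: "p (s *\<^sub>R u) = s * p u" if "s > 0" for s
      using p that unfolding sublinear_def by blast
    consider "t = 0" | "t > 0" | "t < 0" by linarith
    then show ?thesis
    proof cases
      case 1
      then show ?thesis using M that unfolding dominated_graph_def by auto
    next
      case 2
      have "((1 / t) *\<^sub>R u - x1, (1 / t) * v - c) \<in> M"
        using scale[OF that, of "1 / t"] 2 by (simp add: algebra_simps)
      from upper[OF this] have "(1 / t) * v \<le> (1 / t) * p u"
        using homogeneous[of "1 / t"] 2 by simp
      then show ?thesis using 2 by (simp add: divide_le_cancel)
    next
      case 3
      have "((1 / - t) *\<^sub>R u + x1, (1 / - t) * v + c) \<in> M"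
        using scale[OF that, of "1 / - t"] 3 by (simp add: algebra_simps)
      from lower[OF this] have "(1 / - t) * v \<le> (1 / - t) * p u"
        using homogeneous[of "1 / - t"] 3 by simp
      then show ?thesis using 3 by (simp add: divide_le_cancel)
    qed
  qed
  show ?thesis
    unfolding dominated_graph_def
  proof (intro conjI allI impI)
    show "subspace (span (insert (x1, c) M))" by (rule subspace_span)
    show "\<forall>(u, v)\<in>span (insert (x1, c) M). v \<le> p u" using bounded mem by blast
  qed (rule subspace_graph_single_valued[OF subspace_span single_valued])
qed

lemma maximal_dominated_graph_exists:
  assumes "dominated_graph p G"
  obtains M where "G \<subseteq> M" "dominated_graph p M"
    "\<And>M'. dominated_graph p M' \<Longrightarrow> M \<subseteq> M' \<Longrightarrow> M' = M"
proof -
  have "\<exists>M\<in>{M. G \<subseteq> M \<and> dominated_graph p M}.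
      \<forall>X\<in>{M. G \<subseteq> M \<and> dominated_graph p M}. M \<subseteq> X \<longrightarrow> X = M"
  proof (rule subset_Zorn_nonempty)
    show "{M. G \<subseteq> M \<and> dominated_graph p M} \<noteq> {}" using assms by blast
    fix C assume "C \<noteq> {}" and "subset.chain {M. G \<subseteq> M \<and> dominated_graph p M} C"
    then have sub: "\<And>M. M \<in> C \<Longrightarrow> G \<subseteq> M \<and> dominated_graph p M"
      and chain: "\<And>M M'. M \<in> C \<Longrightarrow> M' \<in> C \<Longrightarrow> M \<subseteq> M' \<or> M' \<subseteq> M"
      by (auto simp: subset_chain_def)
    obtain M where "M \<in> C" using \<open>C \<noteq> {}\<close> by blast
    then have "G \<subseteq> \<Union>C" using sub by (meson Sup_upper order_trans)
    moreover have "dominated_graph p (\<Union>C)"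
      using \<open>C \<noteq> {}\<close> sub chain by (simp add: dominated_graph_Union_chain)
    ultimately show "\<Union>C \<in> {M. G \<subseteq> M \<and> dominated_graph p M}" by blast
  qed
  then obtain M where M: "M \<in> {M. G \<subseteq> M \<and> dominated_graph p M}"
    and max: "\<forall>X\<in>{M. G \<subseteq> M \<and> dominated_graph p M}. M \<subseteq> X \<longrightarrow> X = M" ..
  show ?thesis
  proof (rule that)
    show "G \<subseteq> M" "dominated_graph p M" using M by simp_all
    fix M' assume "dominated_graph p M'" "M \<subseteq> M'"
    then show "M' = M" using max \<open>G \<subseteq> M\<close> by blast
  qed
qed

lemma maximal_dominated_graph_total:
  assumes p: "sublinear p" and M: "dominated_graph p M"
    and maximal: "\<And>M'. dominated_graph p M' \<Longrightarrow> M \<subseteq> M' \<Longrightarrow> M' = M"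
  shows "\<exists>y. (x1, y) \<in> M"
proof (rule ccontr)
  assume x1: "\<nexists>y. (x1, y) \<in> M"
  obtain c where "\<And>x y. (x, y) \<in> M \<Longrightarrow> y - p (x - x1) \<le> c"
    and "\<And>x y. (x, y) \<in> M \<Longrightarrow> c \<le> p (x + x1) - y"
    using dominated_graph_extension_value_exists[OF p M] by blast
  then have "dominated_graph p (span (insert (x1, c) M))"
    using dominated_graph_extend[OF p M] x1 by blast
  then have "span (insert (x1, c) M) = M"
    using maximal span_superset by blast
  then show False using x1 span_base[of "(x1, c)" "insert (x1, c) M"] by auto
qed

theorem hahn_banach_graph:
  assumes p: "sublinear p" and G: "dominated_graph p G"
  obtains F where "linear F" "\<And>x. F x \<le> p x" "\<And>x y. (x, y) \<in> G \<Longrightarrow> F x = y"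
proof -
  obtain M where GM: "G \<subseteq> M" and M: "dominated_graph p M"
    and maximal: "\<And>M'. dominated_graph p M' \<Longrightarrow> M \<subseteq> M' \<Longrightarrow> M' = M"
    using maximal_dominated_graph_exists[OF G] by blast
  have Msub: "subspace M" and Mfun: "\<And>x y z. (x, y) \<in> M \<Longrightarrow> (x, z) \<in> M \<Longrightarrow> y = z"
    and Mbound: "\<And>x y. (x, y) \<in> M \<Longrightarrow> y \<le> p x"
    using M unfolding dominated_graph_def by auto
  define F where "F x = (THE y. (x, y) \<in> M)" for x
  have F_eq: "F x = y" if "(x, y) \<in> M" for x y
    unfolding F_def using that Mfun by blast
  have F_graph: "(x, F x) \<in> M" for x
    using maximal_dominated_graph_total[OF p M maximal] F_eq by blast
  show ?thesis
  proof
    show "linear F"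
    proof
      show "F (x + y) = F x + F y" for x y
        using F_eq subspace_add[OF Msub F_graph F_graph] by simp
      show "F (c *\<^sub>R x) = c *\<^sub>R F x" for c x
        using F_eq subspace_scale[OF Msub F_graph] by simp
    qed
    show "F x \<le> p x" for x using Mbound[OF F_graph] .
    show "F x = y" if "(x, y) \<in> G" for x y using F_eq GM that by blast
  qed
qed

lemma functional_separating_point_from_subspace:
  fixes W :: "'a::real_normed_vector set"
  assumes W: "subspace W" and d: "0 \<le> d" and far: "\<And>w. w \<in> W \<Longrightarrow> d \<le> norm (x0 - w)"
  shows "\<exists>F :: 'a \<Rightarrow>\<^sub>L real. norm F \<le> 1 \<and> blinfun_apply F x0 = d \<and> (\<forall>w\<in>W. blinfun_apply F w = 0)"
proof (cases "x0 \<in> W")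
  case True
  then have "d = 0" using far[of x0] d by simp
  then show ?thesis by (intro exI[of _ 0]) simp
next
  case False
  define M where "M = (\<lambda>w. (w, 0::real)) ` W"
  have "linear (\<lambda>w. (w, 0::real))" by (simp add: linearI zero_prod_def)
  then have M: "dominated_graph norm M"
    unfolding dominated_graph_def M_def using linear_subspace_image[OF _ W] by auto
  have "dominated_graph norm (span (insert (x0, d) M))"
  proof (rule dominated_graph_extend[OF sublinear_norm M])
    show "(x0, y) \<notin> M" for y using False unfolding M_def by blast
    show "y - norm (x - x0) \<le> d" if "(x, y) \<in> M" for x y
      using that unfolding M_def by (auto intro: order_trans[OF _ d])
    show "d \<le> norm (x + x0) - y" if "(x, y) \<in> M" for x y
      using that far[of "- x"] subspace_neg[OF W] unfolding M_def by (auto simp: add.commute)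
  qed
  then obtain F where F: "linear F" "\<And>x. F x \<le> norm x"
    and extends: "\<And>x y. (x, y) \<in> span (insert (x0, d) M) \<Longrightarrow> F x = y"
    by (rule hahn_banach_graph[OF sublinear_norm]) blast
  have bounded: "\<bar>F x\<bar> \<le> norm x" for x
    using F(2)[of x] F(2)[of "- x"] linear_neg[OF F(1)] by simp
  then have "bounded_linear F"
    using F(1) by (auto intro: bounded_linear_intro[where K = 1] simp: linear_add linear_scale)
  show ?thesis
  proof (intro exI[of _ "Blinfun F"] conjI ballI)
    show "norm (Blinfun F) \<le> 1"
      using bounded by (intro norm_blinfun_bound)
        (simp_all add: bounded_linear_Blinfun_apply \<open>bounded_linear F\<close>)
    show "Blinfun F x0 = d"
      using extends span_base[of "(x0, d)"]
      by (simp add: bounded_linear_Blinfun_apply \<open>bounded_linear F\<close>)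
    fix w assume "w \<in> W"
    then show "Blinfun F w = 0"
      using extends span_base[of "(w, 0)" "insert (x0, d) M"] unfolding M_def
      by (simp add: bounded_linear_Blinfun_apply \<open>bounded_linear F\<close>)
  qed
qed

section \<open>Weak-star continuous functionals on the dual space\<close>

definition canonical_embedding :: "'a::real_normed_vector \<Rightarrow> ('a \<Rightarrow>\<^sub>L real) \<Rightarrow>\<^sub>L real" where
  "canonical_embedding x = Blinfun (\<lambda>\<phi>. blinfun_apply \<phi> x)"

lemma canonical_embedding_apply [simp]: "canonical_embedding x \<phi> = blinfun_apply \<phi> x"
  unfolding canonical_embedding_def
  by (simp add: bounded_linear_Blinfun_apply)

lemma linear_canonical_embedding: "linear canonical_embedding"
  by (rule linearI; rule blinfun_eqI)
    (simp_all add: blinfun.add_left blinfun.add_right blinfun.scaleR_left blinfun.scaleR_right)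

lemma norm_canonical_embedding_le: "norm (canonical_embedding x) \<le> norm x"
proof (rule norm_blinfun_bound)
  show "norm (canonical_embedding x \<phi>) \<le> norm x * norm \<phi>" for \<phi>
    using norm_blinfun[of \<phi> x] by (simp add: mult.commute)
qed simp

lemma topspace_weak_star_topology [simp]: "topspace weak_star_topology = UNIV"
  unfolding weak_star_topology_def by auto

lemma openin_weak_star_topology_nhd:
  fixes U :: "('a::real_normed_vector \<Rightarrow>\<^sub>L real) set" and \<phi>0 :: "'a \<Rightarrow>\<^sub>L real"
  assumes "openin weak_star_topology U" "\<phi>0 \<in> U"
  obtains A e where "finite A" "0 < e"
    "\<And>\<phi>. \<forall>x\<in>A. \<bar>blinfun_apply \<phi> x - \<phi>0 x\<bar> < e \<Longrightarrow> \<phi> \<in> U"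
proof -
  define nhd where "nhd V \<longleftrightarrow> (\<exists>A e. finite A \<and> 0 < e \<and>
      (\<forall>\<phi>. (\<forall>x\<in>A. \<bar>blinfun_apply \<phi> x - \<phi>0 x\<bar> < e) \<longrightarrow> \<phi> \<in> V))" for V
  have nhd_mono: "nhd V'" if "nhd V" "V \<subseteq> V'" for V V'
    using that unfolding nhd_def by blast
  have "generate_topology_on {{\<phi>. blinfun_apply \<phi> x \<in> V} | x V. open (V::real set)} U"
    using assms(1) unfolding weak_star_topology_def openin_topology_generated_by_iff .
  then have "\<phi>0 \<in> U \<longrightarrow> nhd U"
  proof (induction rule: generate_topology_on.induct)
    case (Int U1 U2)
    show ?case
    proof
      assume "\<phi>0 \<in> U1 \<inter> U2"
      then have "nhd U1" "nhd U2" using Int.IH by auto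
      then obtain A1 e1 A2 e2 where "finite A1" "0 < e1" "finite A2" "0 < e2"
        "\<forall>\<phi>. (\<forall>x\<in>A1. \<bar>blinfun_apply \<phi> x - \<phi>0 x\<bar> < e1) \<longrightarrow> \<phi> \<in> U1"
        "\<forall>\<phi>. (\<forall>x\<in>A2. \<bar>blinfun_apply \<phi> x - \<phi>0 x\<bar> < e2) \<longrightarrow> \<phi> \<in> U2"
        unfolding nhd_def by blast
      then show "nhd (U1 \<inter> U2)"
        unfolding nhd_def by (intro exI[of _ "A1 \<union> A2"] exI[of _ "min e1 e2"]) auto
    qed
  next
    case (UN K)
    show ?case
    proof
      assume "\<phi>0 \<in> \<Union>K"
      then obtain V where "V \<in> K" "\<phi>0 \<in> V" by blast
      then show "nhd (\<Union>K)" using UN.IH nhd_mono[of V "\<Union>K"] by blast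
    qed
  next
    case (Basis B)
    then obtain x V where B: "B = {\<phi>. blinfun_apply \<phi> x \<in> V}" and "open V" by blast
    show ?case
    proof
      assume "\<phi>0 \<in> B"
      then obtain e where "0 < e" "\<And>y. dist y (\<phi>0 x) < e \<Longrightarrow> y \<in> V"
        using \<open>open V\<close> B open_dist by blast
      then show "nhd B"
        unfolding nhd_def B by (intro exI[of _ "{x}"] exI[of _ e]) (auto simp: dist_real_def)
    qed
  qed (simp add: nhd_def)
  then obtain A e where "finite A" "0 < e"
    "\<forall>\<phi>. (\<forall>x\<in>A. \<bar>blinfun_apply \<phi> x - \<phi>0 x\<bar> < e) \<longrightarrow> \<phi> \<in> U"
    using assms(2) unfolding nhd_def by blast
  then show ?thesis using that by blast
qed

lemma linear_functional_eq_evaluation: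
  fixes h :: "('a::real_normed_vector \<Rightarrow>\<^sub>L real) \<Rightarrow> real"
    and S :: "('a \<Rightarrow>\<^sub>L real) set"
  assumes h: "linear h" and "finite A" and "subspace S"
    and kernel: "\<And>\<phi>. \<phi> \<in> S \<Longrightarrow> \<forall>x\<in>A. blinfun_apply \<phi> x = 0 \<Longrightarrow> h \<phi> = 0"
  shows "\<exists>x0. \<forall>\<phi>\<in>S. h \<phi> = blinfun_apply \<phi> x0"
  using \<open>finite A\<close> \<open>subspace S\<close> kernel
proof (induction A arbitrary: S)
  case empty
  then show ?case by (intro exI[of _ 0]) simp
next
  case (insert a A S)
  define S' where "S' = S \<inter> {\<phi>. blinfun_apply \<phi> a = 0}"
  have "subspace {\<phi>::'a \<Rightarrow>\<^sub>L real. blinfun_apply \<phi> a = 0}"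
    unfolding subspace_def by (simp add: blinfun.add_left blinfun.scaleR_left)
  then have "subspace S'" using insert.prems(1) subspace_inter unfolding S'_def by blast
  moreover have "\<And>\<phi>. \<phi> \<in> S' \<Longrightarrow> \<forall>x\<in>A. blinfun_apply \<phi> x = 0 \<Longrightarrow> h \<phi> = 0"
    using insert.prems(2) unfolding S'_def by auto
  ultimately obtain x1 where x1: "\<forall>\<phi>\<in>S'. h \<phi> = blinfun_apply \<phi> x1" using insert.IH by blast
  show ?case
  proof (cases "\<forall>\<phi>\<in>S. blinfun_apply \<phi> a = 0")
    case True
    then have "S' = S" unfolding S'_def by auto
    then show ?thesis using x1 by blast
  next
    case False
    then obtain v0 where "v0 \<in> S" "v0 a \<noteq> 0" by blast
    define v where "v = (1 / v0 a) *\<^sub>R v0"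
    have v: "v \<in> S" "v a = 1"
      using \<open>v0 \<in> S\<close> \<open>v0 a \<noteq> 0\<close> insert.prems(1) subspace_scale
      unfolding v_def by (auto simp: blinfun.scaleR_left)
    \<comment> \<open>\<open>S\<close> is \<open>S'\<close> plus the line through \<open>v\<close>; the correction term makes the formula exact at \<open>v\<close>\<close>
    show ?thesis
    proof (intro exI[of _ "x1 + (h v - v x1) *\<^sub>R a"] ballI)
      fix \<phi> assume "\<phi> \<in> S"
      have "\<phi> - blinfun_apply \<phi> a *\<^sub>R v \<in> S'"
        using \<open>\<phi> \<in> S\<close> v insert.prems(1) unfolding S'_def
        by (simp add: subspace_diff subspace_scale blinfun.diff_left blinfun.scaleR_left)
      then have "h (\<phi> - blinfun_apply \<phi> a *\<^sub>R v) = (\<phi> - blinfun_apply \<phi> a *\<^sub>R v) x1"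
        using x1 by blast
      then have "h \<phi> - blinfun_apply \<phi> a * h v = blinfun_apply \<phi> x1 - blinfun_apply \<phi> a * v x1"
        by (simp add: linear_diff[OF h] linear_scale[OF h] blinfun.diff_left blinfun.scaleR_left)
      moreover have "\<phi> (x1 + (h v - v x1) *\<^sub>R a) = \<phi> x1 + (h v - v x1) * \<phi> a"
        by (simp add: blinfun.add_right blinfun.scaleR_right)
      ultimately show "h \<phi> = \<phi> (x1 + (h v - v x1) *\<^sub>R a)"
        by (simp add: algebra_simps)
    qed
  qed
qed

lemma weak_star_continuous_in_range_canonical_embedding:
  fixes h :: "('a::real_normed_vector \<Rightarrow>\<^sub>L real) \<Rightarrow>\<^sub>L real"
  assumes "weak_star_continuous h"
  shows "h \<in> range canonical_embedding"
proof -
  have "openin weak_star_topology {\<phi> \<in> topspace weak_star_topology. h \<phi> \<in> {-1<..<1}}"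
    using assms openin_continuous_map_preimage unfolding weak_star_continuous_def
    by (metis open_greaterThanLessThan open_openin)
  moreover have "{\<phi> \<in> topspace weak_star_topology. h \<phi> \<in> {-1<..<1}} = {\<phi>. \<bar>h \<phi>\<bar> < 1}"
    by (auto simp: abs_less_iff)
  ultimately have "openin weak_star_topology {\<phi>. \<bar>h \<phi>\<bar> < 1}" by simp
  moreover have "0 \<in> {\<phi>. \<bar>h \<phi>\<bar> < 1}" by simp
  ultimately obtain A e where "finite A" "0 < e"
    and "\<And>\<phi>. \<forall>x\<in>A. \<bar>blinfun_apply \<phi> x - blinfun_apply 0 x\<bar> < e \<Longrightarrow> \<phi> \<in> {\<phi>. \<bar>h \<phi>\<bar> < 1}"
    by (rule openin_weak_star_topology_nhd) blast
  then have nhd: "\<And>\<phi>. \<forall>x\<in>A. \<bar>blinfun_apply \<phi> x\<bar> < e \<Longrightarrow> \<bar>h \<phi>\<bar> < 1" by simp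
  have kernel: "h \<phi> = 0" if "\<forall>x\<in>A. blinfun_apply \<phi> x = 0" for \<phi>
  proof (rule ccontr)
    assume "h \<phi> \<noteq> 0"
    \<comment> \<open>all multiples of \<open>\<phi>\<close> lie in the neighbourhood, where \<open>\<bar>h\<bar> < 1\<close>\<close>
    then have "\<bar>h ((2 / \<bar>h \<phi>\<bar>) *\<^sub>R \<phi>)\<bar> = 2"
      by (simp add: blinfun.scaleR_right abs_mult)
    moreover have "\<bar>h ((2 / \<bar>h \<phi>\<bar>) *\<^sub>R \<phi>)\<bar> < 1"
      using that \<open>0 < e\<close> by (intro nhd) (simp add: blinfun.scaleR_left)
    ultimately show False by simp
  qed
  have "linear (blinfun_apply h)"
    by (simp add: blinfun.bounded_linear_right bounded_linear.linear)
  then have "\<exists>x0. \<forall>\<phi>\<in>UNIV. h \<phi> = blinfun_apply \<phi> x0"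
    by (rule linear_functional_eq_evaluation[OF _ \<open>finite A\<close> subspace_UNIV])
      (use kernel in blast)
  then obtain x0 where "\<forall>\<phi>. h \<phi> = blinfun_apply \<phi> x0" by blast
  then have "h = canonical_embedding x0" by (intro blinfun_eqI) simp
  then show ?thesis by (rule range_eqI)
qed

section \<open>Best approximation by weak-star continuous functionals\<close>

lemma best_approximation_iff:
  "best_approximation f Y g0 \<longleftrightarrow> g0 \<in> Y \<and> (\<forall>g\<in>Y. norm (f - g0) \<le> norm (f - g))"
proof
  assume best: "best_approximation f Y g0"
  have "norm (f - g0) \<le> norm (f - g)" if "g \<in> Y" for g
    using best that unfolding best_approximation_def
    by (auto intro!: cInf_lower bdd_belowI[of _ 0])
  then show "g0 \<in> Y \<and> (\<forall>g\<in>Y. norm (f - g0) \<le> norm (f - g))"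
    using best unfolding best_approximation_def by blast
next
  assume "g0 \<in> Y \<and> (\<forall>g\<in>Y. norm (f - g0) \<le> norm (f - g))"
  then show "best_approximation f Y g0"
    unfolding best_approximation_def by (auto intro!: cInf_eq_minimum[symmetric])
qed

lemma norm_diff_le_if_norming_annihilator:
  assumes "\<phi> \<in> null_space g0 \<inter> null_space g" "\<phi> \<in> norming_set (f - g0)"
  shows "norm (f - g0) \<le> norm (f - g)"
proof -
  have "norm \<phi> = 1" using assms(2) unfolding norming_set_def by simp
  have "norm (f - g0) = \<bar>(f - g0) \<phi>\<bar>" using assms(2) unfolding norming_set_def by simp
  also have "\<dots> = \<bar>(f - g) \<phi>\<bar>"
    using assms(1) unfolding null_space_def by (simp add: blinfun.diff_left)
  also have "\<dots> \<le> norm (f - g) * norm \<phi>"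
    using norm_blinfun[of "f - g" \<phi>] by simp
  finally show ?thesis using \<open>norm \<phi> = 1\<close> by simp
qed

lemma norming_annihilator_exists_if_nearest:
  fixes f g0 :: "('a::real_normed_vector \<Rightarrow>\<^sub>L real) \<Rightarrow>\<^sub>L real"
  assumes Z: "subspace Z" "Z \<subseteq> range canonical_embedding" "g0 \<in> Z"
    and f: "f \<in> range canonical_embedding" "f \<noteq> g0"
    and nearest: "\<And>g. g \<in> Z \<Longrightarrow> norm (f - g0) \<le> norm (f - g)"
  shows "(\<Inter>g\<in>Z. null_space g) \<inter> norming_set (f - g0) \<noteq> {}"
proof -
  obtain x0 where x0: "f = canonical_embedding x0" using f(1) by blast
  define d where "d = norm (f - g0)"
  define W where "W = canonical_embedding -` Z"
  have "d > 0" using f(2) unfolding d_def by simp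
  have "subspace W"
    unfolding W_def by (rule linear_subspace_vimage[OF linear_canonical_embedding Z(1)])
  moreover have "0 \<le> d" using \<open>d > 0\<close> by simp
  moreover have "d \<le> norm (x0 - w)" if "w \<in> W" for w
  proof -
    have "d \<le> norm (f - canonical_embedding w)"
      using nearest that unfolding d_def W_def by simp
    also have "f - canonical_embedding w = canonical_embedding (x0 - w)"
      using x0 by (simp add: linear_diff[OF linear_canonical_embedding])
    also have "norm \<dots> \<le> norm (x0 - w)" by (rule norm_canonical_embedding_le)
    finally show ?thesis .
  qed
  ultimately obtain F :: "'a \<Rightarrow>\<^sub>L real"
    where F: "norm F \<le> 1" "F x0 = d" "\<And>w. w \<in> W \<Longrightarrow> F w = 0"
    using functional_separating_point_from_subspace by meson
  have annihilates: "F \<in> null_space g" if g: "g \<in> Z" for g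
  proof -
    obtain w where "g = canonical_embedding w" using Z(2) g by blast
    moreover from this have "w \<in> W" using g unfolding W_def by simp
    ultimately show ?thesis using F(3) unfolding null_space_def by simp
  qed
  have "(f - g0) F = d"
    using annihilates[OF Z(3)] F(2) x0 unfolding null_space_def by (simp add: blinfun.diff_left)
  then have "d \<le> d * norm F"
    using norm_blinfun[of "f - g0" F] unfolding d_def by simp
  then have "norm F = 1" using F(1) \<open>d > 0\<close> by simp
  with \<open>(f - g0) F = d\<close> have "F \<in> norming_set (f - g0)"
    using \<open>d > 0\<close> unfolding norming_set_def d_def by simp
  with annihilates show ?thesis by blast
qed

lemma best_approximation_if_norming_annihilators:
  assumes "subspace Y" "g0 \<in> Y"
    and norming: "\<forall>Z. subspace Z \<and> (\<exists>B. finite B \<and> span B = Z) \<and> Z \<subseteq> Y \<and> g0 \<in> Z \<longrightarrow>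
      (\<Inter>g\<in>Z. null_space g) \<inter> norming_set (f - g0) \<noteq> {}"
  shows "best_approximation f Y g0"
proof -
  have "norm (f - g0) \<le> norm (f - g)" if "g \<in> Y" for g
  proof -
    have spanned: "g0 \<in> span {g0, g}" "g \<in> span {g0, g}" by (simp_all add: span_base)
    have "(\<Inter>h\<in>span {g0, g}. null_space h) \<inter> norming_set (f - g0) \<noteq> {}"
    proof (rule norming[rule_format], intro conjI)
      show "\<exists>B. finite B \<and> span B = span {g0, g}" by (intro exI[of _ "{g0, g}"]) simp
      show "span {g0, g} \<subseteq> Y" using assms(1,2) that by (simp add: span_minimal)
    qed (simp_all add: spanned)
    then obtain \<phi> where "\<phi> \<in> (\<Inter>h\<in>span {g0, g}. null_space h)" "\<phi> \<in> norming_set (f - g0)"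
      by blast
    with spanned show ?thesis
      by (intro norm_diff_le_if_norming_annihilator) auto
  qed
  then show ?thesis using assms(2) best_approximation_iff by blast
qed

theorem theorem4p1:
  fixes f g0 :: "('a::banach \<Rightarrow>\<^sub>L real) \<Rightarrow>\<^sub>L real"
    and Y :: "(('a \<Rightarrow>\<^sub>L real) \<Rightarrow>\<^sub>L real) set"
  assumes "weak_star_continuous f"
    and "subspace Y"
    and "\<forall>g\<in>Y. weak_star_continuous g"
    and "f \<notin> Y"
    and "g0 \<in> Y"
  shows "best_approximation f Y g0 \<longleftrightarrow>
    (\<forall>Z. subspace Z \<and> (\<exists>B. finite B \<and> span B = Z) \<and> Z \<subseteq> Y \<and> g0 \<in> Z \<longrightarrow>
        (\<Inter>g\<in>Z. null_space g) \<inter> norming_set (f - g0) \<noteq> {})"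
proof (intro iffI allI impI)
  fix Z assume best: "best_approximation f Y g0"
    and Z: "subspace Z \<and> (\<exists>B. finite B \<and> span B = Z) \<and> Z \<subseteq> Y \<and> g0 \<in> Z"
  show "(\<Inter>g\<in>Z. null_space g) \<inter> norming_set (f - g0) \<noteq> {}"
  proof (rule norming_annihilator_exists_if_nearest)
    show "subspace Z" "g0 \<in> Z" using Z by simp_all
    show "Z \<subseteq> range canonical_embedding"
      using Z assms(3) weak_star_continuous_in_range_canonical_embedding by blast
    show "f \<in> range canonical_embedding"
      using assms(1) by (rule weak_star_continuous_in_range_canonical_embedding)
    show "f \<noteq> g0" using assms(4,5) by blast
    show "norm (f - g0) \<le> norm (f - g)" if "g \<in> Z" for g
      using best Z that best_approximation_iff by blast
  qed
qed (rule best_approximation_if_norming_annihilators[OF assms(2,5)])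

end
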